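(* Let $A$ be a Banach algebra and $f\in A^*$. The following are equivalent: (i) whenever $(x_n),(y_n)$ are weakly null sequences in $A$, $f(x_ny_n)\to 0$; (ii) whenever $(x_n)$ is a weakly null sequence and $(y_n)$ is a weakly Cauchy sequence in $A$, $f(x_ny_n)\to 0$; (iii) $T_f$ maps weakly precompact subsets of $A$ onto L-sets; (iii') $S_f$ maps weakly precompact subsets of $A$ onto L-sets.
   Context: For a Banach algebra $A$, $f\in A^*$ and $a\in A$, define $fa,af\in A^*$ by $fa(x)=f(ax)$ and $af(x)=f(xa)$ for $x\in A$. The operators $T_f,S_f:A\to A^*$ are $T_f(a)=fa$ and $S_f(a)=af$. A set $E\subseteq A^*$ is an L-set if for every weakly null sequence $(x_n)$ in $A$, $\lim_{n\to\infty}\sup_{g\in E}|g(x_n)|=0$. A subset of a Banach space is weakly precompact if every sequence in it has a weakly Cauchy subsequence. *)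

theory Defs
  imports "HOL-Analysis.Analysis"
begin

text \<open>Banach algebra A: a type of class real_normed_algebra (associative, not necessarily
unital) that is complete (banach). The dual A^* consists of the bounded linear
functionals A \<Rightarrow> real.\<close>

definition weakly_null :: "(nat \<Rightarrow> 'a::real_normed_vector) \<Rightarrow> bool" where
  "weakly_null x \<longleftrightarrow> (\<forall>g::'a \<Rightarrow> real. bounded_linear g \<longrightarrow> (\<lambda>n. g (x n)) \<longlonglongrightarrow> 0)"

definition weakly_Cauchy :: "(nat \<Rightarrow> 'a::real_normed_vector) \<Rightarrow> bool" where
  "weakly_Cauchy x \<longleftrightarrow> (\<forall>g::'a \<Rightarrow> real. bounded_linear g \<longrightarrow> Cauchy (\<lambda>n. g (x n)))"

definition weakly_precompact :: "'a::real_normed_vector set \<Rightarrow> bool" where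
  "weakly_precompact S \<longleftrightarrow>
     (\<forall>x::nat \<Rightarrow> 'a. (\<forall>n. x n \<in> S) \<longrightarrow> (\<exists>r. strict_mono r \<and> weakly_Cauchy (x \<circ> r)))"

text \<open>L-set: sup over E of |g(x_n)| tends to 0 for every weakly null (x_n),
written out uniformly (avoids Sup of possibly unbounded real sets).\<close>
definition L_set :: "('a::real_normed_vector \<Rightarrow> real) set \<Rightarrow> bool" where
  "L_set E \<longleftrightarrow> (\<forall>x. weakly_null x \<longrightarrow>
      (\<forall>\<epsilon>>0. \<exists>N. \<forall>n\<ge>N. \<forall>g\<in>E. \<bar>g (x n)\<bar> \<le> \<epsilon>))"

definition T_op :: "('a::real_normed_algebra \<Rightarrow> real) \<Rightarrow> 'a \<Rightarrow> ('a \<Rightarrow> real)" where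
  "T_op f a = (\<lambda>x. f (a * x))"

definition S_op :: "('a::real_normed_algebra \<Rightarrow> real) \<Rightarrow> 'a \<Rightarrow> ('a \<Rightarrow> real)" where
  "S_op f a = (\<lambda>x. f (x * a))"

end

theory Submission
  imports Defs
begin

text \<open>(i) implies (ii) by a blocking argument: if f(x_n y_n) stayed away from 0, choose indices
n_0 < n_1 < ... such that f(x_{n_{k+1}} y_{n_k}) is small while f(x_{n_{k+1}} y_{n_{k+1}}) is not;
then x_{n_{k+1}} and the differences y_{n_{k+1}} - y_{n_k} are weakly null, contradicting (i).
The same argument with the factors swapped handles a weakly Cauchy left factor. (iii) and (iii')
are the uniform versions: a failure of the L-set property yields elements of the weakly precompact
set, hence a weakly Cauchy sequence of them, along which the products do not vanish. Conversely,
the range of a weakly null sequence is weakly precompact, so (iii) or (iii') gives back (i).\<close>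

lemma weakly_null_subseq:
  assumes "weakly_null x" "strict_mono r"
  shows "weakly_null (x \<circ> r)"
  using assms LIMSEQ_subseq_LIMSEQ unfolding weakly_null_def by (fastforce simp: o_def)

lemma weakly_Cauchy_subseq:
  assumes "weakly_Cauchy x" "strict_mono r"
  shows "weakly_Cauchy (x \<circ> r)"
  using assms Cauchy_subseq_Cauchy unfolding weakly_Cauchy_def by (fastforce simp: o_def)

lemma weakly_null_imp_weakly_Cauchy: "weakly_null x \<Longrightarrow> weakly_Cauchy x"
  unfolding weakly_null_def weakly_Cauchy_def using LIMSEQ_imp_Cauchy by blast

lemma weakly_Cauchy_const: "weakly_Cauchy (\<lambda>_. a)"
  unfolding weakly_Cauchy_def by (auto intro: LIMSEQ_imp_Cauchy)

lemma Cauchy_subseq_Suc_diff_tendsto_zero: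
  fixes c :: "nat \<Rightarrow> 'a::banach"
  assumes "Cauchy c" "strict_mono s"
  shows "(\<lambda>k. c (s (Suc k)) - c (s k)) \<longlonglongrightarrow> 0"
proof -
  obtain L where L: "c \<longlonglongrightarrow> L" using assms(1) Cauchy_convergent_iff convergent_def by blast
  have "strict_mono (s \<circ> Suc)" using assms(2) by (simp add: strict_mono_def)
  then have "(\<lambda>k. c (s (Suc k))) \<longlonglongrightarrow> L" using LIMSEQ_subseq_LIMSEQ[OF L] by (simp add: o_def)
  moreover have "(\<lambda>k. c (s k)) \<longlonglongrightarrow> L" using LIMSEQ_subseq_LIMSEQ[OF L assms(2)] by (simp add: o_def)
  ultimately show ?thesis using tendsto_diff by fastforce
qed

lemma strict_mono_chain_exists:
  assumes "\<And>m. \<exists>n>m. R m n"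
  shows "\<exists>s::nat \<Rightarrow> nat. strict_mono s \<and> (\<forall>k. R (s k) (s (Suc k)))"
proof -
  obtain s where "\<forall>k. s (Suc k) > s k \<and> R (s k) (s (Suc k))"
    using dependent_nat_choice[of "\<lambda>_ _. True" "\<lambda>_ m n. n > m \<and> R m n"] assms by blast
  then show ?thesis by (auto simp: strict_mono_Suc_iff)
qed

lemma nat_seq_subseq_const_or_strict_mono:
  fixes \<phi> :: "nat \<Rightarrow> nat"
  obtains r :: "nat \<Rightarrow> nat" where "strict_mono r" "\<exists>m. \<forall>k. \<phi> (r k) = m"
  | r :: "nat \<Rightarrow> nat" where "strict_mono r" "strict_mono (\<phi> \<circ> r)"
proof (cases "\<exists>m. infinite {n. \<phi> n = m}")
  case True
  then obtain m where inf: "infinite {n. \<phi> n = m}" by blast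
  show ?thesis
  proof (rule that(1))
    show "strict_mono (enumerate {n. \<phi> n = m})" using strict_mono_enumerate[OF inf] .
    show "\<exists>m'. \<forall>k. \<phi> (enumerate {n. \<phi> n = m} k) = m'" using enumerate_in_set[OF inf] by blast
  qed
next
  case False
  have "\<exists>n>m. \<phi> n > \<phi> m" for m
  proof -
    have "{n. \<phi> n \<le> \<phi> m} = (\<Union>j\<le>\<phi> m. {n. \<phi> n = j})" by auto
    moreover have "finite (\<Union>j\<le>\<phi> m. {n. \<phi> n = j})"
      using False by (intro finite_UN_I) simp_all
    ultimately have "finite {n. \<phi> n \<le> \<phi> m}" by (simp only:)
    then obtain M where M: "\<forall>n\<in>{n. \<phi> n \<le> \<phi> m}. n \<le> M"
      unfolding finite_nat_set_iff_bounded_le by blast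
    then have "\<not> \<phi> (Suc (max m M)) \<le> \<phi> m" by fastforce
    then show ?thesis by (intro exI[of _ "Suc (max m M)"]) simp
  qed
  then obtain r where "strict_mono r" "\<forall>k. \<phi> (r k) < \<phi> (r (Suc k))"
    using strict_mono_chain_exists[of "\<lambda>m n. \<phi> m < \<phi> n"] by blast
  then show ?thesis using that(2) by (simp add: strict_mono_Suc_iff)
qed

lemma weakly_precompact_range:
  assumes "weakly_Cauchy x"
  shows "weakly_precompact (range x)"
  unfolding weakly_precompact_def
proof (intro allI impI)
  fix z :: "nat \<Rightarrow> 'a" assume "\<forall>n. z n \<in> range x"
  then have "\<forall>n. \<exists>m. z n = x m" by blast
  then obtain \<phi> where "\<And>n. z n = x (\<phi> n)" by metis
  then have \<phi>: "z = x \<circ> \<phi>" by (simp add: fun_eq_iff)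
  show "\<exists>r. strict_mono r \<and> weakly_Cauchy (z \<circ> r)"
  proof (rule nat_seq_subseq_const_or_strict_mono[of \<phi>])
    fix r :: "nat \<Rightarrow> nat" assume r: "strict_mono r" "\<exists>m. \<forall>k. \<phi> (r k) = m"
    then obtain m where "z \<circ> r = (\<lambda>_::nat. x m)" using \<phi> by (auto simp: fun_eq_iff)
    then show ?thesis using r(1) weakly_Cauchy_const[of "x m"] by (intro exI[of _ r]) simp
  next
    fix r :: "nat \<Rightarrow> nat" assume "strict_mono r" "strict_mono (\<phi> \<circ> r)"
    then show ?thesis using weakly_Cauchy_subseq[OF assms, of "\<phi> \<circ> r"] \<phi> by (auto simp: o_assoc)
  qed
qed

text \<open>Here \<open>h a b\<close> stands for \<open>f (a * b)\<close> or \<open>f (b * a)\<close>.\<close>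

lemma pairing_weakly_null_weakly_Cauchy_tendsto_zero:
  fixes h :: "'a::banach \<Rightarrow> 'a \<Rightarrow> real"
  assumes lin: "\<And>b. bounded_linear (\<lambda>a. h a b)"
    and diff: "\<And>a b c. h a (b - c) = h a b - h a c"
    and null_null: "\<And>x y. weakly_null x \<Longrightarrow> weakly_null y \<Longrightarrow> (\<lambda>n. h (x n) (y n)) \<longlonglongrightarrow> 0"
    and x: "weakly_null x" and y: "weakly_Cauchy y"
  shows "(\<lambda>n. h (x n) (y n)) \<longlonglongrightarrow> 0"
proof (rule ccontr)
  assume "\<not> ?thesis"
  then obtain \<epsilon> where e: "\<epsilon> > 0" and frequently: "\<And>N. \<exists>n\<ge>N. \<epsilon> \<le> \<bar>h (x n) (y n)\<bar>"
    unfolding LIMSEQ_def dist_real_def by (force simp: not_less)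
  define R where "R m n \<longleftrightarrow> \<epsilon> \<le> \<bar>h (x n) (y n)\<bar> \<and> \<bar>h (x n) (y m)\<bar> < \<epsilon>/2" for m n
  have "\<exists>n>m. R m n" for m
  proof -
    have "(\<lambda>n. h (x n) (y m)) \<longlonglongrightarrow> 0" using x lin unfolding weakly_null_def by blast
    then obtain N where "\<forall>n\<ge>N. \<bar>h (x n) (y m)\<bar> < \<epsilon>/2" using LIMSEQ_D[of _ 0 "\<epsilon>/2"] e by fastforce
    moreover obtain n where "n \<ge> max N (Suc m)" "\<epsilon> \<le> \<bar>h (x n) (y n)\<bar>" using frequently by blast
    ultimately show ?thesis unfolding R_def by (intro exI[of _ n]) auto
  qed
  then obtain s where s: "strict_mono s" and R: "\<And>k. R (s k) (s (Suc k))"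
    using strict_mono_chain_exists by blast
  define u where "u k = x (s (Suc k))" for k
  define v where "v k = y (s (Suc k)) - y (s k)" for k
  have "weakly_null u" unfolding u_def[abs_def]
    using weakly_null_subseq[OF x, of "s \<circ> Suc"] s by (simp add: o_def strict_mono_def)
  moreover have "weakly_null v" unfolding weakly_null_def
  proof (intro allI impI)
    fix g :: "'a \<Rightarrow> real" assume g: "bounded_linear g"
    then have "Cauchy (\<lambda>n. g (y n))" using y unfolding weakly_Cauchy_def by blast
    then show "(\<lambda>n. g (v n)) \<longlonglongrightarrow> 0"
      using Cauchy_subseq_Suc_diff_tendsto_zero[OF _ s] linear_diff[OF bounded_linear.linear[OF g]]
      by (simp add: v_def)
  qed
  ultimately have "(\<lambda>k. h (u k) (v k)) \<longlonglongrightarrow> 0" using null_null by blast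
  then obtain K where K: "\<bar>h (u K) (v K)\<bar> < \<epsilon>/2" using LIMSEQ_D[of _ 0 "\<epsilon>/2"] e by fastforce
  have "h (u K) (v K) = h (x (s (Suc K))) (y (s (Suc K))) - h (x (s (Suc K))) (y (s K))"
    unfolding u_def v_def diff ..
  with R[of K] K show False unfolding R_def by linarith
qed

lemma L_set_image_if_pairing_tendsto_zero:
  fixes \<Phi> :: "'a::real_normed_vector \<Rightarrow> 'a \<Rightarrow> real"
  assumes tendsto: "\<And>x y. weakly_Cauchy x \<Longrightarrow> weakly_null y \<Longrightarrow> (\<lambda>n. \<Phi> (x n) (y n)) \<longlonglongrightarrow> 0"
    and K: "weakly_precompact K"
  shows "L_set (\<Phi> ` K)"
  unfolding L_set_def
proof (intro allI impI)
  fix x :: "nat \<Rightarrow> 'a" and \<epsilon> :: real assume x: "weakly_null x" and e: "\<epsilon> > 0"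
  show "\<exists>N. \<forall>n\<ge>N. \<forall>g\<in>\<Phi> ` K. \<bar>g (x n)\<bar> \<le> \<epsilon>"
  proof (rule ccontr)
    assume "\<not> ?thesis"
    then have "\<forall>N. \<exists>n\<ge>N. \<exists>a\<in>K. \<epsilon> < \<bar>\<Phi> a (x n)\<bar>" by (auto simp: not_le)
    then have inf: "infinite {n. \<exists>a\<in>K. \<epsilon> < \<bar>\<Phi> a (x n)\<bar>}"
      unfolding infinite_nat_iff_unbounded_le by auto
    define r where "r = enumerate {n. \<exists>a\<in>K. \<epsilon> < \<bar>\<Phi> a (x n)\<bar>}"
    have r: "strict_mono r" using strict_mono_enumerate[OF inf] r_def by simp
    have "\<forall>k. \<exists>a\<in>K. \<epsilon> < \<bar>\<Phi> a (x (r k))\<bar>"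
      using enumerate_in_set[OF inf] unfolding r_def by auto
    then obtain a where a: "\<And>k. a k \<in> K" "\<And>k. \<epsilon> < \<bar>\<Phi> (a k) (x (r k))\<bar>" by metis
    from K a(1) obtain q where q: "strict_mono q" "weakly_Cauchy (a \<circ> q)"
      unfolding weakly_precompact_def by blast
    have "weakly_null (x \<circ> (r \<circ> q))" using weakly_null_subseq[OF x strict_mono_o[OF r q(1)]] .
    then have "(\<lambda>n. \<Phi> ((a \<circ> q) n) ((x \<circ> (r \<circ> q)) n)) \<longlonglongrightarrow> 0" using tendsto q(2) by blast
    then obtain N where "\<forall>n\<ge>N. \<bar>\<Phi> (a (q n)) (x (r (q n)))\<bar> < \<epsilon>" using LIMSEQ_D[of _ 0 \<epsilon>] e by fastforce
    with a(2)[of "q N"] show False by auto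
  qed
qed

lemma pairing_tendsto_zero_if_L_set_image:
  fixes \<Phi> :: "'a::real_normed_vector \<Rightarrow> 'a \<Rightarrow> real"
  assumes L: "\<And>K. weakly_precompact K \<Longrightarrow> L_set (\<Phi> ` K)"
    and x: "weakly_null x" and y: "weakly_null y"
  shows "(\<lambda>n. \<Phi> (x n) (y n)) \<longlonglongrightarrow> 0"
proof -
  have "L_set (\<Phi> ` range x)"
    using L weakly_precompact_range weakly_null_imp_weakly_Cauchy x by blast
  then have uniform: "\<forall>\<epsilon>>0. \<exists>N. \<forall>n\<ge>N. \<bar>\<Phi> (x n) (y n)\<bar> \<le> \<epsilon>"
    using y unfolding L_set_def by blast
  show ?thesis unfolding LIMSEQ_def dist_real_def
  proof (intro allI impI)
    fix \<epsilon> :: real assume "\<epsilon> > 0"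
    then obtain N where N: "\<forall>n\<ge>N. \<bar>\<Phi> (x n) (y n)\<bar> \<le> \<epsilon>/2" using uniform half_gt_zero by blast
    show "\<exists>N. \<forall>n\<ge>N. \<bar>\<Phi> (x n) (y n) - 0\<bar> < \<epsilon>"
      using N \<open>\<epsilon> > 0\<close> by (intro exI[of _ N]) fastforce
  qed
qed

theorem mainTheorem1:
  fixes f :: "'a::{real_normed_algebra, banach} \<Rightarrow> real"
  assumes "bounded_linear f"
  defines "P1 \<equiv> (\<forall>x y. weakly_null x \<longrightarrow> weakly_null y \<longrightarrow> (\<lambda>n. f (x n * y n)) \<longlonglongrightarrow> 0)"
      and "P2 \<equiv> (\<forall>x y. weakly_null x \<longrightarrow> weakly_Cauchy y \<longrightarrow> (\<lambda>n. f (x n * y n)) \<longlonglongrightarrow> 0)"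
      and "P3 \<equiv> (\<forall>K::'a set. weakly_precompact K \<longrightarrow> L_set (T_op f ` K))"
      and "P3' \<equiv> (\<forall>K::'a set. weakly_precompact K \<longrightarrow> L_set (S_op f ` K))"
  shows "(P1 \<longleftrightarrow> P2) \<and> (P2 \<longleftrightarrow> P3) \<and> (P3 \<longleftrightarrow> P3')"
proof -
  have lin_left: "bounded_linear (\<lambda>a. f (a * b))" and lin_right: "bounded_linear (\<lambda>a. f (b * a))" for b
    using bounded_linear_compose[OF assms(1) bounded_linear_mult_left]
      bounded_linear_compose[OF assms(1) bounded_linear_mult_right] by (simp_all add: o_def)
  have diff_right: "f (a * (b - c)) = f (a * b) - f (a * c)"
    and diff_left: "f ((b - c) * a) = f (b * a) - f (c * a)" for a b c
    by (simp_all add: algebra_simps linear_diff[OF bounded_linear.linear[OF assms(1)]])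
  have "P1 \<Longrightarrow> P2" unfolding P1_def P2_def
    using pairing_weakly_null_weakly_Cauchy_tendsto_zero[of "\<lambda>a b. f (a * b)", OF lin_left diff_right]
    by blast
  moreover have "P2 \<Longrightarrow> P1" unfolding P1_def P2_def using weakly_null_imp_weakly_Cauchy by blast
  moreover have "P1 \<Longrightarrow> P3"
  proof -
    assume P1
    then have "weakly_Cauchy x \<Longrightarrow> weakly_null y \<Longrightarrow> (\<lambda>n. T_op f (x n) (y n)) \<longlonglongrightarrow> 0" for x y
      unfolding P1_def T_op_def
      using pairing_weakly_null_weakly_Cauchy_tendsto_zero[of "\<lambda>a b. f (b * a)", OF lin_right diff_left, of y x]
      by blast
    then show P3 unfolding P3_def using L_set_image_if_pairing_tendsto_zero by blast
  qed
  moreover have "P2 \<Longrightarrow> P3'" unfolding P2_def P3'_def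
    using L_set_image_if_pairing_tendsto_zero[of "S_op f"] by (simp add: S_op_def)
  moreover have "P3 \<Longrightarrow> P1" "P3' \<Longrightarrow> P1" unfolding P3_def P3'_def P1_def
    using pairing_tendsto_zero_if_L_set_image[of "T_op f"] pairing_tendsto_zero_if_L_set_image[of "S_op f"]
    by (simp_all add: T_op_def S_op_def)
  ultimately show ?thesis by blast
qed

end
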